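(* Let $\bar\gamma\in(0,2\pi)$ be fixed and, for each integer $\rho\ge1$, let $\tau_\rho\in(0,\pi)$ be the solution of $$\frac{\tau-\bar\gamma/2}{2\rho-1}-\tan^{-1}\!\Big(\frac{\sin\tau}{2\rho-\cos\tau}\Big)=0,$$ and set $\bar t_\rho=\frac{4\rho\tau_\rho-\bar\gamma}{2\rho-1}$ (this is the minimum transfer time to $(\gamma,0,\gamma)$ with $\gamma=\bar\gamma+2(\rho-1)\pi$, minus $2(\rho-1)\pi$). Then as $\rho\to\infty$, $\tau_\rho\to\tau_\infty$, where $\tau_\infty$ is the solution of $\tau-\sin\tau-\bar\gamma/2=0$, and $\bar t_\rho\to 2\tau_\infty$.
   Context: $\tan^{-1}$ takes values in $(-\pi/2,\pi/2)$. *)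

theory Defs
  imports "HOL-Analysis.Analysis"
begin

end

theory Submission imports Defs "HOL-Real_Asymp.Real_Asymp" begin

(* Writing N = 2 rho - 1, the defining equation reads
     tau - gbar/2 = N * arctan (sin tau / (N + 1 - cos tau)).
   Since arctan x = x + O(x^3) and the argument is O(1/N), the right-hand side
   equals sin tau + O(1/N); hence the residual tau - sin tau - gbar/2 is O(1/N)
   (lemma arctan_equation_residual).  The map x - sin x is strictly increasing
   (lemma strict_mono_x_minus_sin), and for a strictly increasing function f,
   convergence of f (x n) to f c forces convergence of x n to c
   (lemma tendsto_from_strict_mono_image).  Together these give tau_rho ->
   tau_inf; the limit of tbar_rho = 2 tau + (2 tau - gbar)/N then follows from
   the ordinary limit rules. *)

lemma sin_less_self:
  fixes x :: real
  assumes "0 < x"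
  shows "sin x < x"
proof (cases "x < 2")
  case True
  have sin_half: "sin (x/2) > 0" using assms True pi_gt3 by (intro sin_gt_zero) auto
  have sin_quarter: "sin (x/4) > 0" using assms True pi_gt3 by (intro sin_gt_zero) auto
  have cos_half: "cos (x/2) < 1" using cos_double_sin[of "x/4"] sin_quarter by simp
  have "sin x = 2 * sin (x/2) * cos (x/2)" using sin_double[of "x/2"] by simp
  also have "\<dots> < 2 * sin (x/2)" using sin_half cos_half by simp
  also have "\<dots> \<le> x" using sin_x_le_x[of "x/2"] assms by simp
  finally show ?thesis .
next
  case False
  then show ?thesis using sin_le_one[of x] by linarith
qed

lemma abs_sin_less_self:
  fixes d :: real
  assumes "0 < d"
  shows "\<bar>sin d\<bar> < d"
proof -
  have "- sin d < d"
  proof (cases "d < pi")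
    case True then show ?thesis using sin_gt_zero[of d] assms by simp
  next
    case False then show ?thesis using sin_ge_minus_one[of d] pi_gt3 by linarith
  qed
  then show ?thesis using sin_less_self[OF assms] by simp
qed

text \<open>The function x - sin x, whose zero set shifted by gbar/2 defines tau_inf,
  is strictly increasing; this makes tau_inf recoverable from the limit.\<close>
lemma strict_mono_x_minus_sin: "strict_mono (\<lambda>x::real. x - sin x)"
proof (rule strict_monoI)
  fix a b :: real
  assume "a < b"
  have "sin b - sin a = 2 * sin ((b - a) / 2) * cos ((b + a) / 2)" by (rule sin_diff_sin)
  also have "\<dots> \<le> 2 * \<bar>sin ((b - a) / 2)\<bar>"
  proof -
    have "sin ((b - a) / 2) * cos ((b + a) / 2) \<le> \<bar>sin ((b - a) / 2)\<bar> * \<bar>cos ((b + a) / 2)\<bar>"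
      by (metis abs_ge_self abs_mult)
    also have "\<dots> \<le> \<bar>sin ((b - a) / 2)\<bar>"
      by (simp add: abs_cos_le_one mult_left_le)
    finally show ?thesis by simp
  qed
  also have "\<dots> < b - a" using abs_sin_less_self[of "(b - a) / 2"] \<open>a < b\<close> by simp
  finally show "a - sin a < b - sin b" by simp
qed

text \<open>A strictly increasing function reflects convergence: if f (x n) tends to
  f c then x n tends to c.  No continuity of f is needed.\<close>
lemma tendsto_from_strict_mono_image:
  fixes f :: "'a::linorder_topology \<Rightarrow> 'b::linorder_topology"
  assumes mono: "strict_mono f" and lim: "((\<lambda>n. f (x n)) \<longlongrightarrow> f c) F"
  shows "(x \<longlongrightarrow> c) F"
proof (rule order_tendstoI)
  fix a assume "a < c"
  then have "f a < f c" using mono by (simp add: strict_mono_less)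
  with lim have "\<forall>\<^sub>F n in F. f a < f (x n)" by (rule order_tendstoD)
  then show "\<forall>\<^sub>F n in F. a < x n" by eventually_elim (use mono in \<open>simp add: strict_mono_less\<close>)
next
  fix a assume "c < a"
  then have "f c < f a" using mono by (simp add: strict_mono_less)
  with lim have "\<forall>\<^sub>F n in F. f (x n) < f a" by (rule order_tendstoD)
  then show "\<forall>\<^sub>F n in F. x n < a" by eventually_elim (use mono in \<open>simp add: strict_mono_less\<close>)
qed

text \<open>Scaled cubic Taylor bound for arctan: for 0 \<le> x \<le> 1/N the
  difference N arctan x - N x is at most N x^3/3 \<le> 1/N^2 \<le> 1/N.\<close>
lemma scaled_arctan_approx:
  fixes N x :: real
  assumes N: "1 < N" and x: "0 \<le> x" "x \<le> 1/N"
  shows "\<bar>N * arctan x - N * x\<bar> \<le> 1/N"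
proof -
  have "1/N < 1" using N by simp
  then have x_lt_1: "x < 1" using x by linarith
  have lower: "x - x^3/3 \<le> arctan x"
    using arctan_lower_bound[OF x(1) x_lt_1, of 1] by (simp add: numeral_eq_Suc)
  have upper: "arctan x \<le> x" using arctan_le_self[OF x(1)] .
  have Nx: "N * x \<le> 1" using x N by (simp add: field_simps)
  have "\<bar>N * arctan x - N * x\<bar> = N * (x - arctan x)" using upper N by (simp add: right_diff_distrib)
  also have "\<dots> \<le> N * (x^3/3)" using lower N by (intro mult_left_mono) auto
  also have "\<dots> \<le> (N * x) * x^2" using N x by (simp add: power3_eq_cube power2_eq_square)
  also have "\<dots> \<le> x^2" using mult_right_mono[OF Nx, of "x^2"] by simp
  also have "\<dots> \<le> (1/N)^2" using x by (simp add: power_mono)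
  also have "\<dots> \<le> 1/N" using N by (simp add: power2_eq_square field_simps)
  finally show ?thesis .
qed

lemma arctan_equation_residual:
  fixes N t c :: real
  assumes N: "1 < N" and sin_nonneg: "0 \<le> sin t"
    and eq: "(t - c) / N = arctan (sin t / (N + 1 - cos t))"
  shows "\<bar>t - sin t - c\<bar> \<le> 3 / N"
proof -
  define D where "D = N + 1 - cos t"
  define x where "x = sin t / D"
  have N_le_D: "N \<le> D" unfolding D_def using cos_le_one[of t] by linarith
  have D_pos: "0 < D" using N N_le_D by linarith
  have x_nonneg: "0 \<le> x" using sin_nonneg D_pos by (simp add: x_def)
  have "x \<le> 1 / D" unfolding x_def using sin_le_one[of t] D_pos by (simp add: divide_right_mono)
  also have "\<dots> \<le> 1 / N" using N_le_D N by (simp add: frac_le)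
  finally have x_small: "x \<le> 1 / N" .
  have arctan_part: "\<bar>N * arctan x - N * x\<bar> \<le> 1 / N"
    using scaled_arctan_approx[OF N x_nonneg x_small] .
  have "N * x - sin t = sin t * (N - D) / D"
    unfolding x_def using D_pos by (simp add: field_simps)
  also have "N - D = cos t - 1" unfolding D_def by simp
  finally have "N * x - sin t = sin t * (cos t - 1) / D" .
  moreover have "\<bar>sin t * (cos t - 1)\<bar> \<le> 1 * 2"
    unfolding abs_mult using sin_nonneg sin_le_one[of t] cos_le_one[of t] cos_ge_minus_one[of t]
    by (intro mult_mono) auto
  ultimately have "\<bar>N * x - sin t\<bar> \<le> 2 / D" using D_pos by (simp add: divide_right_mono)
  also have "\<dots> \<le> 2 / N" using N_le_D N by (simp add: frac_le)
  finally have sin_part: "\<bar>N * x - sin t\<bar> \<le> 2 / N" .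
  have "t - c = N * arctan x" using eq N unfolding x_def D_def by (simp add: field_simps)
  then have "t - sin t - c = (N * arctan x - N * x) + (N * x - sin t)" by simp
  then show ?thesis using arctan_part sin_part by linarith
qed

theorem mainTheorem9:
  fixes gbar :: real and tau :: "nat \<Rightarrow> real" and tau_inf :: real
  assumes gbar: "0 < gbar" "gbar < 2 * pi"
    and tau_range: "\<And>\<rho>. \<rho> \<ge> 1 \<Longrightarrow> 0 < tau \<rho> \<and> tau \<rho> < pi"
    and tau_eq: "\<And>\<rho>. \<rho> \<ge> 1 \<Longrightarrow>
        (tau \<rho> - gbar / 2) / (2 * real \<rho> - 1)
          - arctan (sin (tau \<rho>) / (2 * real \<rho> - cos (tau \<rho>))) = 0"
    and tau_inf_eq: "tau_inf - sin tau_inf - gbar / 2 = 0"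
  shows "tau \<longlonglongrightarrow> tau_inf \<and>
      (\<lambda>\<rho>. (4 * real \<rho> * tau \<rho> - gbar) / (2 * real \<rho> - 1)) \<longlonglongrightarrow> 2 * tau_inf"
proof -
  have residual: "\<bar>tau \<rho> - sin (tau \<rho>) - gbar / 2\<bar> \<le> 3 / (2 * real \<rho> - 1)" if "\<rho> \<ge> 2" for \<rho>
  proof (rule arctan_equation_residual)
    show "0 \<le> sin (tau \<rho>)" using tau_range[of \<rho>] that by (intro sin_ge_zero) auto
    show "(tau \<rho> - gbar / 2) / (2 * real \<rho> - 1)
        = arctan (sin (tau \<rho>) / (2 * real \<rho> - 1 + 1 - cos (tau \<rho>)))"
      using tau_eq[of \<rho>] that by simp
  qed (use that in simp)
  have "(\<lambda>\<rho>. tau \<rho> - sin (tau \<rho>) - gbar / 2) \<longlonglongrightarrow> 0"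
  proof (rule Lim_null_comparison)
    show "\<forall>\<^sub>F \<rho> in sequentially. norm (tau \<rho> - sin (tau \<rho>) - gbar / 2) \<le> 3 / (2 * real \<rho> - 1)"
      using residual by (auto intro!: eventually_sequentiallyI[of 2])
    show "(\<lambda>\<rho>::nat. 3 / (2 * real \<rho> - 1)) \<longlonglongrightarrow> 0" by real_asymp
  qed
  then have "(\<lambda>\<rho>. tau \<rho> - sin (tau \<rho>)) \<longlonglongrightarrow> gbar / 2"
    by (simp add: LIM_zero_iff)
  also have "gbar / 2 = tau_inf - sin tau_inf" using tau_inf_eq by simp
  finally have tau_lim: "tau \<longlonglongrightarrow> tau_inf"
    by (rule tendsto_from_strict_mono_image[OF strict_mono_x_minus_sin])
  have "(\<lambda>\<rho>. 2 * tau \<rho> + (2 * tau \<rho> - gbar) * (1 / (2 * real \<rho> - 1)))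
      \<longlonglongrightarrow> 2 * tau_inf + (2 * tau_inf - gbar) * 0"
    by (intro tendsto_intros tau_lim) real_asymp
  moreover have "2 * tau \<rho> + (2 * tau \<rho> - gbar) * (1 / (2 * real \<rho> - 1))
      = (4 * real \<rho> * tau \<rho> - gbar) / (2 * real \<rho> - 1)" if "\<rho> \<ge> 1" for \<rho>
    using that by (simp add: field_simps)
  ultimately have "(\<lambda>\<rho>. (4 * real \<rho> * tau \<rho> - gbar) / (2 * real \<rho> - 1)) \<longlonglongrightarrow> 2 * tau_inf"
    by (simp add: Lim_transform_eventually eventually_sequentiallyI[of 1])
  with tau_lim show ?thesis by simp
qed

end
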